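(* For a Frobenius array $\mu \in \mathcal{F}(\beta)$, the array $\gamma$ constructed from $\mu$ is an $S_{\beta}$-partition, i.e., the entries of $\gamma$ in each row are (weakly) decreasing and the entries in each column are (weakly) decreasing. In addition, the entries in each column of $\gamma$ that came from the positive blocks of $\mu$ are strictly decreasing.
   Context: Let $\beta=(b_1,\ldots,b_m)$ be a composition of $d$ and set $r_i=b_1+\cdots+b_i$ ($r_0=0$). The poset $S_\beta$ is $\bigcup_{l=1}^{m}\{(i,j): l\le i\le l+1,\ r_{l-1}+1\le j\le r_l\}$ with $(i_1,j_1)\le(i_2,j_2)$ iff $i_1\le i_2$ and $j_1\le j_2$; it carries the natural labeling $\nu(i,j)=r_{l-1}+j+(i-l)b_l$ (where $r_{l-1}+1\le j\le r_l$), so an $S_\beta$-partition is an order-reversing map $S_\beta\to\mathbb{N}$ (nonnegative integers). A Frobenius symbol with $d$ columns is a two-rowed array $\left(\begin{smallmatrix}x_1&\cdots&x_d\\ y_1&\cdots&y_d\end{smallmatrix}\right)$ with $x_1>\cdots>x_d\ge0$, $y_1>\cdots>y_d\ge0$; a column is positive if $x_i-y_i\ge1$ and negative if $x_i-y_i\le0$; parity blocks are maximal sets of contiguous columns of the same parity. Subtracting $d-1,d-2,\ldots,0$ from the entries of columns $1,\ldots,d$ in each row gives a Frobenius array $\mu$ (rows weakly decreasing, column parities unchanged). $\mathcal{F}(\beta)$ is the set of Frobenius arrays with $d$ columns and $m$ parity blocks $B_1,\ldots,B_m$, where $B_m$ is positive and $B_i$ has $b_i$ columns. From $\mu\in\mathcal{F}(\beta)$,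 $\gamma$ is built as follows: interchange the top and bottom entries in every column of each negative block to get $\hat\mu$; then place the $(i,j)$-th entry $\hat\mu_{i,j}$ ($i\in\{1,2\}$) at position $(i+l,j)$ of $S_\beta$, where $r_l<j\le r_{l+1}$. *)

theory Defs
  imports Main
begin

definition composition :: "nat list \<Rightarrow> bool" where
  "composition \<beta> \<longleftrightarrow> (\<forall>b\<in>set \<beta>. 0 < b)"

definition rr :: "nat list \<Rightarrow> nat \<Rightarrow> nat" where
  "rr \<beta> l = sum_list (take l \<beta>)"

definition colblock :: "nat list \<Rightarrow> nat \<Rightarrow> nat set" where
  "colblock \<beta> l = {rr \<beta> (l - 1) + 1 .. rr \<beta> l}"

definition S_poset :: "nat list \<Rightarrow> (nat \<times> nat) set" where
  "S_poset \<beta> = (\<Union>l\<in>{1..length \<beta>}. {(i, j). l \<le> i \<and> i \<le> l + 1 \<and> j \<in> colblock \<beta> l})"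

definition S_le :: "nat \<times> nat \<Rightarrow> nat \<times> nat \<Rightarrow> bool" where
  "S_le p q \<longleftrightarrow> fst p \<le> fst q \<and> snd p \<le> snd q"

definition S_partition :: "nat list \<Rightarrow> (nat \<times> nat \<Rightarrow> nat) \<Rightarrow> bool" where
  "S_partition \<beta> \<gamma> \<longleftrightarrow>
     (\<forall>p\<in>S_poset \<beta>. \<forall>q\<in>S_poset \<beta>. S_le p q \<longrightarrow> \<gamma> q \<le> \<gamma> p)"

text \<open>A Frobenius array with d columns: entries mu i j, i in {1,2}, j in {1..d},
  nonnegative integers, rows weakly decreasing.\<close>
definition frobenius_array :: "nat \<Rightarrow> (nat \<Rightarrow> nat \<Rightarrow> nat) \<Rightarrow> bool" where
  "frobenius_array d \<mu> \<longleftrightarrow>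
     (\<forall>i\<in>{1,2}. \<forall>j j'. 1 \<le> j \<and> j \<le> j' \<and> j' \<le> d \<longrightarrow> \<mu> i j' \<le> \<mu> i j)"

definition positive_col :: "(nat \<Rightarrow> nat \<Rightarrow> nat) \<Rightarrow> nat \<Rightarrow> bool" where
  "positive_col \<mu> j \<longleftrightarrow> int (\<mu> 1 j) - int (\<mu> 2 j) \<ge> 1"

text \<open>F(beta): the parity blocks are exactly the column blocks given by beta
  (each block has constant parity, consecutive blocks differ in parity, i.e. the
  blocks are maximal), and the last block B_m is positive.\<close>
definition in_F :: "nat list \<Rightarrow> (nat \<Rightarrow> nat \<Rightarrow> nat) \<Rightarrow> bool" where
  "in_F \<beta> \<mu> \<longleftrightarrow>
     frobenius_array (sum_list \<beta>) \<mu> \<and>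
     (\<forall>l\<in>{1..length \<beta>}. \<forall>j\<in>colblock \<beta> l. \<forall>j'\<in>colblock \<beta> l.
         positive_col \<mu> j \<longleftrightarrow> positive_col \<mu> j') \<and>
     (\<forall>l. 1 \<le> l \<and> l < length \<beta> \<longrightarrow>
         positive_col \<mu> (rr \<beta> l) \<noteq> positive_col \<mu> (rr \<beta> l + 1)) \<and>
     (\<forall>j\<in>colblock \<beta> (length \<beta>). positive_col \<mu> j)"

definition blk :: "nat list \<Rightarrow> nat \<Rightarrow> nat" where
  "blk \<beta> j = (LEAST l. j \<le> rr \<beta> l)"

definition mu_hat :: "(nat \<Rightarrow> nat \<Rightarrow> nat) \<Rightarrow> nat \<Rightarrow> nat \<Rightarrow> nat" where
  "mu_hat \<mu> i j = (if positive_col \<mu> j then \<mu> i j else \<mu> (3 - i) j)"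

definition gamma :: "nat list \<Rightarrow> (nat \<Rightarrow> nat \<Rightarrow> nat) \<Rightarrow> nat \<times> nat \<Rightarrow> nat" where
  "gamma \<beta> \<mu> p = (let a = fst p; j = snd p; l = blk \<beta> j - 1 in
      if a = 1 + l then mu_hat \<mu> 1 j else if a = 2 + l then mu_hat \<mu> 2 j else 0)"

end

theory Submission
  imports Defs
begin

text \<open>Swapping the negative columns puts the larger entry of every column on top, so
  \<open>mu_hat \<mu> 1\<close> and \<open>mu_hat \<mu> 2\<close> are the columnwise maximum and minimum of \<open>\<mu>\<close>; as the rows
  of \<open>\<mu>\<close> decrease, both are decreasing, which handles two cells of \<open>S_\<beta>\<close> in the same block.
  For cells in different blocks \<open>l < l'\<close>, the columns \<open>r_l\<close> and \<open>r_l + 1\<close> have different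
  parities, and a parity change forces the maximum of the later column below the minimum
  of the earlier one. Strictness in a column is the strict inequality \<open>x > y\<close> of a
  positive column.\<close>

lemma rr_mono: "l \<le> l' \<Longrightarrow> rr \<beta> l \<le> rr \<beta> l'"
  unfolding rr_def by (metis le_add_diff_inverse sum_list_append le_add1 take_add)

lemma rr_le_sum_list: "rr \<beta> l \<le> sum_list \<beta>"
  unfolding rr_def by (metis append_take_drop_id sum_list_append le_add1)

lemma colblock_bounds: "j \<in> colblock \<beta> l \<Longrightarrow> 1 \<le> j \<and> j \<le> sum_list \<beta>"
  using rr_le_sum_list[of \<beta> l] by (auto simp: colblock_def)

lemma colblock_index_mono:
  assumes "j \<in> colblock \<beta> l" "j' \<in> colblock \<beta> l'" "j \<le> j'"
  shows "l \<le> l'"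
proof (rule ccontr)
  assume "\<not> l \<le> l'"
  then have "rr \<beta> l' \<le> rr \<beta> (l - 1)" by (intro rr_mono) simp
  with assms show False by (auto simp: colblock_def)
qed

lemma blk_colblock:
  assumes "1 \<le> l" "j \<in> colblock \<beta> l"
  shows "blk \<beta> j = l"
  unfolding blk_def
proof (rule Least_equality)
  show "j \<le> rr \<beta> l" using assms(2) by (simp add: colblock_def)
next
  fix y assume "j \<le> rr \<beta> y"
  show "l \<le> y"
  proof (rule ccontr)
    assume "\<not> l \<le> y"
    then have "rr \<beta> y \<le> rr \<beta> (l - 1)" by (intro rr_mono) simp
    with assms(2) \<open>j \<le> rr \<beta> y\<close> show False by (simp add: colblock_def)
  qed
qed

lemma S_posetE:
  assumes "p \<in> S_poset \<beta>"
  obtains l where "1 \<le> l" "l \<le> length \<beta>" "snd p \<in> colblock \<beta> l" "fst p \<in> {l, l + 1}"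
  using assms unfolding S_poset_def by (force simp: case_prod_beta)

lemma gamma_cell:
  assumes "1 \<le> l" "snd p \<in> colblock \<beta> l" "fst p \<in> {l, l + 1}"
  shows "gamma \<beta> \<mu> p = mu_hat \<mu> (fst p + 1 - l) (snd p)"
  using assms blk_colblock[OF assms(1,2)] unfolding gamma_def Let_def by auto

lemma mu_hat_2_less_1: "positive_col \<mu> j \<Longrightarrow> mu_hat \<mu> 2 j < mu_hat \<mu> 1 j"
  unfolding mu_hat_def positive_col_def by auto

lemma mu_hat_antimono:
  assumes "frobenius_array d \<mu>" "1 \<le> j" "j \<le> j'" "j' \<le> d"
    and "r \<in> {1, 2}" "r' \<in> {1, 2}" "r \<le> r'"
  shows "mu_hat \<mu> r' j' \<le> mu_hat \<mu> r j"
proof -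
  have "\<mu> 1 j' \<le> \<mu> 1 j" "\<mu> 2 j' \<le> \<mu> 2 j"
    using assms(1-4) unfolding frobenius_array_def by auto
  then show ?thesis
    using assms(5-7) unfolding mu_hat_def positive_col_def by auto
qed

lemma mu_hat_1_le_2_of_parity_change:
  assumes "frobenius_array d \<mu>" "1 \<le> j" "j \<le> j'" "j' \<le> d"
    and "positive_col \<mu> j \<noteq> positive_col \<mu> j'"
  shows "mu_hat \<mu> 1 j' \<le> mu_hat \<mu> 2 j"
proof -
  have "\<mu> 1 j' \<le> \<mu> 1 j" "\<mu> 2 j' \<le> \<mu> 2 j"
    using assms(1-4) unfolding frobenius_array_def by auto
  then show ?thesis
    using assms(5) unfolding mu_hat_def positive_col_def by auto
qed

lemma in_F_later_block:
  assumes F: "in_F \<beta> \<mu>"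
    and l: "1 \<le> l" "l < l'" "l' \<le> length \<beta>"
    and j: "j \<in> colblock \<beta> l" and j': "j' \<in> colblock \<beta> l'"
  shows "mu_hat \<mu> 1 j' \<le> mu_hat \<mu> 2 j"
proof -
  define k where "k = rr \<beta> l + 1"
  have fa: "frobenius_array (sum_list \<beta>) \<mu>" using F by (simp add: in_F_def)
  have "rr \<beta> l \<le> rr \<beta> (l' - 1)" using l by (intro rr_mono) simp
  then have "k \<le> j'" using j' by (auto simp: colblock_def k_def)
  have j'_le: "j' \<le> sum_list \<beta>" using colblock_bounds[OF j'] by simp
  have "rr \<beta> l \<in> colblock \<beta> l" using j by (auto simp: colblock_def)
  moreover have "l \<in> {1..length \<beta>}" using l by simp
  ultimately have "positive_col \<mu> j = positive_col \<mu> (rr \<beta> l)"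
    using F j unfolding in_F_def by blast
  moreover have "positive_col \<mu> (rr \<beta> l) \<noteq> positive_col \<mu> k"
    using F l unfolding in_F_def k_def by auto
  moreover have "j \<le> rr \<beta> l" "1 \<le> j" using j by (auto simp: colblock_def)
  ultimately have "mu_hat \<mu> 1 k \<le> mu_hat \<mu> 2 j"
    using \<open>k \<le> j'\<close> j'_le by (intro mu_hat_1_le_2_of_parity_change[OF fa]) (auto simp: k_def)
  moreover have "mu_hat \<mu> 1 j' \<le> mu_hat \<mu> 1 k"
    using \<open>k \<le> j'\<close> j'_le by (intro mu_hat_antimono[OF fa]) (auto simp: k_def)
  ultimately show ?thesis by simp
qed

lemma gamma_S_partition:
  assumes F: "in_F \<beta> \<mu>"
  shows "S_partition \<beta> (gamma \<beta> \<mu>)"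
  unfolding S_partition_def
proof (intro ballI impI)
  fix p q assume "p \<in> S_poset \<beta>" "q \<in> S_poset \<beta>" and "S_le p q"
  obtain l where l: "1 \<le> l" "l \<le> length \<beta>" "snd p \<in> colblock \<beta> l" "fst p \<in> {l, l + 1}"
    using S_posetE[OF \<open>p \<in> S_poset \<beta>\<close>] .
  obtain l' where l': "1 \<le> l'" "l' \<le> length \<beta>" "snd q \<in> colblock \<beta> l'" "fst q \<in> {l', l' + 1}"
    using S_posetE[OF \<open>q \<in> S_poset \<beta>\<close>] .
  have fa: "frobenius_array (sum_list \<beta>) \<mu>" using F by (simp add: in_F_def)
  have le: "snd p \<le> snd q" "fst p \<le> fst q" using \<open>S_le p q\<close> by (auto simp: S_le_def)
  have bounds: "1 \<le> snd p" "snd q \<le> sum_list \<beta>"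
    using colblock_bounds[OF l(3)] colblock_bounds[OF l'(3)] by auto
  have gp: "gamma \<beta> \<mu> p = mu_hat \<mu> (fst p + 1 - l) (snd p)" using gamma_cell l by blast
  have gq: "gamma \<beta> \<mu> q = mu_hat \<mu> (fst q + 1 - l') (snd q)" using gamma_cell l' by blast
  have "l \<le> l'" using colblock_index_mono[OF l(3) l'(3) le(1)] .
  then consider "l = l'" | "l < l'" by linarith
  then show "gamma \<beta> \<mu> q \<le> gamma \<beta> \<mu> p"
  proof cases
    case 1
    then show ?thesis
      unfolding gp gq using l(4) l'(4) le bounds by (intro mu_hat_antimono[OF fa]) auto
  next
    case 2
    have "gamma \<beta> \<mu> q \<le> mu_hat \<mu> 1 (snd q)"
      unfolding gq using l'(4) bounds le by (intro mu_hat_antimono[OF fa]) auto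
    also have "\<dots> \<le> mu_hat \<mu> 2 (snd p)"
      using in_F_later_block[OF F l(1) 2 l'(2) l(3) l'(3)] .
    also have "\<dots> \<le> gamma \<beta> \<mu> p"
      unfolding gp using l(4) bounds le by (intro mu_hat_antimono[OF fa]) auto
    finally show ?thesis .
  qed
qed

lemma gamma_strict_in_positive_column:
  assumes "p \<in> S_poset \<beta>" "q \<in> S_poset \<beta>"
    and "snd p = snd q" "fst p < fst q" "positive_col \<mu> (snd p)"
  shows "gamma \<beta> \<mu> q < gamma \<beta> \<mu> p"
proof -
  obtain l where l: "1 \<le> l" "snd p \<in> colblock \<beta> l" "fst p \<in> {l, l + 1}"
    using S_posetE[OF assms(1)] by blast
  obtain l' where l': "1 \<le> l'" "snd q \<in> colblock \<beta> l'" "fst q \<in> {l', l' + 1}"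
    using S_posetE[OF assms(2)] by blast
  have "l = l'" using blk_colblock[OF l(1,2)] blk_colblock[OF l'(1,2)] assms(3) by simp
  then have "fst p = l" "fst q = l + 1" using l(3) l'(3) assms(4) by auto
  then show ?thesis
    using gamma_cell[OF l] gamma_cell[OF l'] \<open>l = l'\<close> assms(3,5) mu_hat_2_less_1 by simp
qed

theorem lemma4p2:
  fixes \<beta> :: "nat list" and \<mu> :: "nat \<Rightarrow> nat \<Rightarrow> nat"
  assumes "composition \<beta>"
    and "in_F \<beta> \<mu>"
  shows "S_partition \<beta> (gamma \<beta> \<mu>) \<and>
         (\<forall>p\<in>S_poset \<beta>. \<forall>q\<in>S_poset \<beta>.
            snd p = snd q \<and> fst p < fst q \<and> positive_col \<mu> (snd p)
            \<longrightarrow> gamma \<beta> \<mu> q < gamma \<beta> \<mu> p)"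
  using gamma_S_partition[OF assms(2)] gamma_strict_in_positive_column by blast

end
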